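(* For every real $s\ge 2$, \[ \int_{-\infty}^{\infty}\left|\frac{\sin(\pi x)}{\pi x}\right|^{s}dx\;\le\;\frac{1}{\sqrt{s}}\sqrt{\left(1+\frac{1}{s-1}\right)^{s-1}}\;<\;\sqrt{\frac{e}{s}}. \] *)

theory Defs
  imports "HOL-Analysis.Analysis"
begin

definition nsinc :: "real \<Rightarrow> real" where
  "nsinc x = (if x = 0 then 1 else sin (pi * x) / (pi * x))"

end

theory Submission
  imports Defs "HOL-Probability.Probability"
begin

text \<open>
  On [-1, 1] the normalized sinc function is dominated by the Gaussian exp (-pi^2 x^2 / 6), which
  amounts to sin t <= t exp (-t^2 / 6) on [0, pi]; outside [-1, 1] it is dominated by 1 / (pi |x|).
  Integrating this majorant bounds the integral of |nsinc|^s by sqrt (6 / (pi s)) + 2 / (pi^s (s - 1)),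
  which is below the target (itself at least exp (3/8) / sqrt s) as soon as s >= 3.
  For 2 <= s <= 3, convexity of s |-> |nsinc x|^s bounds the integral by the chord between the
  exponents 2 and 3: the integral of nsinc^2 is 1 (an antiderivative comes from the sine integral),
  and the majorant bound at s = 3 is below 5/6. The chord lies below exp ((s - 2) (ln 2 - 1) / 2),
  and a monotonicity argument in s puts that below the target. The strict inequality is
  (1 + 1 / (s - 1)) ^ (s - 1) < e.
\<close>

section \<open>Integrals over the real line\<close>

lemma lborel_integral_even:
  fixes f :: "real \<Rightarrow> real"
  assumes even: "\<And>x. f (- x) = f x"
    and int: "set_integrable lborel {0<..} f"
  shows "integrable lborel f" "(\<integral>x. f x \<partial>lborel) = 2 * (LINT x:{0<..}|lborel. f x)"
proof -
  define g where "g = (\<lambda>x. indicator {0<..} x * f x)"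
  have g: "integrable lborel g"
    using int by (simp add: set_integrable_def g_def)
  have g_reflect: "integrable lborel (\<lambda>x. g (0 + (-1) * x))"
    using lborel_integrable_real_affine_iff[of "-1" g 0] g by simp
  have f_eq: "f x = g x + g (0 + (-1) * x)" if "x \<noteq> 0" for x
    using that by (cases x "0::real" rule: linorder_cases) (simp_all add: g_def even)
  have "(\<lambda>x. if x = 0 then f 0 else g x + g (0 + (-1) * x)) \<in> borel_measurable lborel"
    using borel_measurable_integrable[OF g] by measurable
  also have "(\<lambda>x. if x = 0 then f 0 else g x + g (0 + (-1) * x)) = f"
    using f_eq by auto
  finally have meas: "f \<in> borel_measurable lborel" .
  have AE: "AE x in lborel. g x + g (0 + (-1) * x) = f x"
    using AE_lborel_singleton[of 0] by eventually_elim (auto simp: f_eq)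
  show "integrable lborel f"
    by (rule integrable_cong_AE_imp[OF Bochner_Integration.integrable_add[OF g g_reflect] meas AE])
  have "2 * (\<integral>x. g x \<partial>lborel) = (\<integral>x. g x + g (0 + (-1) * x) \<partial>lborel)"
    using g g_reflect lborel_integral_real_affine[of "-1" g 0] by simp
  also have "\<dots> = (\<integral>x. f x \<partial>lborel)"
    by (rule integral_cong_AE[OF _ meas AE]) (use g g_reflect in auto)
  finally show "(\<integral>x. f x \<partial>lborel) = 2 * (LINT x:{0<..}|lborel. f x)"
    by (simp add: set_lebesgue_integral_def g_def)
qed

lemma set_integral_powr_at_top:
  fixes s :: real assumes "1 < s"
  shows "set_integrable lborel {1..} (\<lambda>x. x powr - s)"
    "(LINT x:{1..}|lborel. x powr - s) = 1 / (s - 1)"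
proof -
  have "- (1 / (1 - s)) = 1 / (s - 1)"
    using assms by (simp add: divide_simps)
  then have hi: "((\<lambda>x. x powr - s) has_integral 1 / (s - 1)) {1..}"
    using has_integral_powr_to_inf[of "-s" 1] assms by simp
  have "(\<lambda>x. x powr - s) absolutely_integrable_on {1..}"
    using hi by (intro nonnegative_absolutely_integrable_1) auto
  then show int: "set_integrable lborel {1..} (\<lambda>x. x powr - s)"
    unfolding set_integrable_def by (subst (asm) integrable_completion) auto
  show "(LINT x:{1..}|lborel. x powr - s) = 1 / (s - 1)"
    using set_borel_integral_eq_integral(2)[OF int] hi by (simp add: integral_unique)
qed

lemma integral_abs_powr_tail:
  fixes s :: real
  assumes "1 < s"
  shows "integrable lborel (\<lambda>x. indicator {1..} \<bar>x\<bar> * \<bar>x\<bar> powr - s)"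
    "(\<integral>x. indicator {1..} \<bar>x\<bar> * \<bar>x\<bar> powr - s \<partial>lborel) = 2 / (s - 1)"
proof -
  define tail where "tail x = indicator {1..} \<bar>x\<bar> * \<bar>x\<bar> powr - s" for x :: real
  have tail_eq: "indicator {0<..} x * tail x = indicator {1..} x * x powr - s" for x :: real
    by (simp add: tail_def indicator_def abs_if)
  have "set_integrable lborel {0<..} tail"
    using set_integral_powr_at_top(1)[OF assms] by (simp add: set_integrable_def tail_eq)
  moreover have "(LINT x:{0<..}|lborel. tail x) = 1 / (s - 1)"
    using set_integral_powr_at_top(2)[OF assms] by (simp add: set_lebesgue_integral_def tail_eq)
  moreover have "tail (- x) = tail x" for x
    by (simp add: tail_def)
  ultimately show "integrable lborel tail" "(\<integral>x. tail x \<partial>lborel) = 2 / (s - 1)"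
    using lborel_integral_even[of tail] by simp_all
qed

lemma integral_exp_neg_mult_square:
  fixes a :: real assumes "0 < a"
  shows "integrable lborel (\<lambda>x. exp (- (a * x\<^sup>2)))"
    "(\<integral>x. exp (- (a * x\<^sup>2)) \<partial>lborel) = sqrt (pi / a)"
proof -
  define \<sigma> where "\<sigma> = sqrt (1 / (2 * a))"
  have \<sigma>: "\<sigma>\<^sup>2 = 1 / (2 * a)" "0 < \<sigma>"
    using assms by (simp_all add: \<sigma>_def)
  have eq: "exp (- (a * x\<^sup>2)) = sqrt (pi / a) * normal_density 0 \<sigma> x" for x
    using assms by (simp add: normal_density_def \<sigma> real_sqrt_divide)
  show "integrable lborel (\<lambda>x. exp (- (a * x\<^sup>2)))"
    unfolding eq using integrable_normal_density[OF \<sigma>(2)] by simp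
  show "(\<integral>x. exp (- (a * x\<^sup>2)) \<partial>lborel) = sqrt (pi / a)"
    unfolding eq using integral_normal_density[OF \<sigma>(2)] by simp
qed

lemma powr_le_convex_combination:
  fixes a p q t :: real
  assumes "0 \<le> a" "0 \<le> t" "t \<le> 1"
  shows "a powr ((1 - t) * p + t * q) \<le> (1 - t) * a powr p + t * a powr q"
proof (cases "a = 0")
  case False
  have "exp ((1 - t) * (p * ln a) + t * (q * ln a)) \<le> (1 - t) * exp (p * ln a) + t * exp (q * ln a)"
    using convex_onD[OF exp_convex, of t "p * ln a" "q * ln a"] assms by simp
  then show ?thesis
    using False assms by (simp add: powr_def algebra_simps)
qed simp

lemma ln_one_plus_ge_quadratic:
  fixes y :: real
  assumes "0 \<le> y"
  shows "y - y\<^sup>2 / 2 \<le> ln (1 + y)"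
proof -
  have "ln (1 + 0) - 0 + 0\<^sup>2 / 2 \<le> ln (1 + y) - y + y\<^sup>2 / 2"
  proof (rule DERIV_nonneg_imp_nondecreasing[OF assms])
    fix x :: real assume "0 \<le> x" "x \<le> y"
    then have "0 \<le> x\<^sup>2 / (1 + x)" and "1 / (1 + x) - 1 + x = x\<^sup>2 / (1 + x)"
      by (simp_all add: field_simps power2_eq_square)
    moreover have "((\<lambda>u. ln (1 + u) - u + u\<^sup>2 / 2) has_real_derivative 1 / (1 + x) - 1 + x) (at x)"
      using \<open>0 \<le> x\<close> by (auto intro!: derivative_eq_intros simp: field_simps)
    ultimately show "\<exists>d. ((\<lambda>u. ln (1 + u) - u + u\<^sup>2 / 2) has_real_derivative d) (at x) \<and> 0 \<le> d"
      by auto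
  qed
  then show ?thesis by simp
qed

lemma sqrt_exp: "sqrt (exp x) = exp (x / 2)"
  by (rule real_sqrt_unique) (simp_all add: power2_eq_square exp_add[symmetric])

lemma pi_cube_ge: "31 \<le> pi ^ 3"
proof -
  have "(3.14159::real) ^ 3 \<le> pi ^ 3"
    using pi_approx by (intro power_mono) auto
  then show ?thesis
    by (simp add: power3_eq_cube)
qed

lemma mult_cos_le_sin:
  assumes "0 \<le> t" "t \<le> pi"
  shows "t * cos t \<le> sin t"
proof -
  have "sin 0 - 0 * cos 0 \<le> sin t - t * cos t"
  proof (rule DERIV_nonneg_imp_nondecreasing[OF assms(1)])
    fix x assume "0 \<le> x" "x \<le> t"
    then have "0 \<le> x * sin x"
      using assms by (simp add: sin_ge_zero)
    then show "\<exists>y. ((\<lambda>x. sin x - x * cos x) has_real_derivative y) (at x) \<and> 0 \<le> y"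
      by (intro exI[of _ "x * sin x"]) (auto intro!: derivative_eq_intros)
  qed
  then show ?thesis by simp
qed

lemma mult_cos_le_sin_sharp:
  assumes "0 \<le> t" "t \<le> pi"
  shows "t * cos t \<le> sin t - t\<^sup>2 * sin t / 3"
proof -
  have "sin 0 - 0\<^sup>2 * sin 0 / 3 - 0 * cos 0 \<le> sin t - t\<^sup>2 * sin t / 3 - t * cos t"
  proof (rule DERIV_nonneg_imp_nondecreasing[OF assms(1)])
    fix x assume "0 \<le> x" "x \<le> t"
    then have "0 \<le> x / 3 * (sin x - x * cos x)"
      using mult_cos_le_sin[of x] assms by simp
    then show "\<exists>y. ((\<lambda>x. sin x - x\<^sup>2 * sin x / 3 - x * cos x) has_real_derivative y) (at x) \<and> 0 \<le> y"
      by (intro exI[of _ "x / 3 * (sin x - x * cos x)"] conjI)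
        (auto intro!: derivative_eq_intros simp: algebra_simps power2_eq_square)
  qed
  then show ?thesis by simp
qed

lemma sin_le_mult_exp_neg_square:
  assumes "0 \<le> t" "t \<le> pi"
  shows "sin t \<le> t * exp (- (t\<^sup>2) / 6)"
proof -
  define h where "h x = sinc x * exp (x\<^sup>2 / 6)" for x
  have "h t \<le> h 0"
  proof (rule DERIV_nonpos_imp_decreasing_open[OF assms(1)])
    fix x assume x: "0 < x" "x < t"
    have "((\<lambda>y. sin y / y * exp (y\<^sup>2 / 6)) has_real_derivative
        exp (x\<^sup>2 / 6) * ((x * cos x - sin x + x\<^sup>2 * sin x / 3) / x\<^sup>2)) (at x)"
      using x by (auto intro!: derivative_eq_intros simp: field_simps power2_eq_square)
    then have "(h has_real_derivative exp (x\<^sup>2 / 6) * ((x * cos x - sin x + x\<^sup>2 * sin x / 3) / x\<^sup>2)) (at x)"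
      by (rule has_field_derivative_transform_within_open[where S = "{0<..}"])
        (use x in \<open>auto simp: h_def\<close>)
    moreover have "(x * cos x - sin x + x\<^sup>2 * sin x / 3) / x\<^sup>2 \<le> 0"
      using mult_cos_le_sin_sharp[of x] x assms by (simp add: divide_nonpos_pos)
    ultimately show "\<exists>y. (h has_real_derivative y) (at x) \<and> y \<le> 0"
      by (metis exp_ge_zero mult_nonneg_nonpos)
  next
    show "continuous_on {0..t} h"
      unfolding h_def by (intro continuous_intros) auto
  qed
  then have "sinc t \<le> exp (- (t\<^sup>2) / 6)"
    by (simp add: h_def exp_minus field_simps)
  then show ?thesis
    using assms by (cases "t = 0") (auto simp: field_simps)
qed

section \<open>Bounds for \<open>(1 + 1/(s - 1)) powr (s - 1)\<close>\<close>

lemma ln_div_pred_ge: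
  fixes u :: real
  assumes "2 \<le> u"
  shows "ln 2 - 1 \<le> ln u - ln (u - 1) - 2 / u"
proof -
  have "ln 2 - ln (2 - 1) - 2 / 2 \<le> ln u - ln (u - 1) - 2 / u"
  proof (rule DERIV_nonneg_imp_nondecreasing[OF assms])
    fix x :: real assume "2 \<le> x" "x \<le> u"
    then have "0 \<le> (x - 2) / (x\<^sup>2 * (x - 1))" and "1 / x - 1 / (x - 1) + 2 / x\<^sup>2 = (x - 2) / (x\<^sup>2 * (x - 1))"
      by (simp_all add: field_simps power2_eq_square)
    moreover have "((\<lambda>u. ln u - ln (u - 1) - 2 / u) has_real_derivative 1 / x - 1 / (x - 1) + 2 / x\<^sup>2) (at x)"
      using \<open>2 \<le> x\<close> by (auto intro!: derivative_eq_intros simp: field_simps power2_eq_square)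
    ultimately show "\<exists>d. ((\<lambda>u. ln u - ln (u - 1) - 2 / u) has_real_derivative d) (at x) \<and> 0 \<le> d"
      by auto
  qed
  then show ?thesis by simp
qed

lemma mult_ln_div_pred_ge:
  fixes s :: real
  assumes "2 \<le> s"
  shows "ln s + (s - 2) * (ln 2 - 1) \<le> (s - 1) * (ln s - ln (s - 1))"
proof -
  define Q where "Q u = (u - 1) * (ln u - ln (u - 1)) - ln u - (u - 2) * (ln 2 - 1)" for u :: real
  have "Q 2 \<le> Q s"
  proof (rule DERIV_nonneg_imp_nondecreasing[OF assms])
    fix x :: real assume x: "2 \<le> x" "x \<le> s"
    have "(Q has_real_derivative (ln x - ln (x - 1)) + (x - 1) * (1 / x - 1 / (x - 1)) - 1 / x - (ln 2 - 1)) (at x)"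
      unfolding Q_def[abs_def] using x by (auto intro!: derivative_eq_intros)
    moreover have "(ln x - ln (x - 1)) + (x - 1) * (1 / x - 1 / (x - 1)) - 1 / x - (ln 2 - 1)
        = (ln x - ln (x - 1) - 2 / x) - (ln 2 - 1)"
      using x by (simp add: field_simps)
    moreover have "0 \<le> (ln x - ln (x - 1) - 2 / x) - (ln 2 - 1)"
      using ln_div_pred_ge[OF x(1)] by simp
    ultimately show "\<exists>d. (Q has_real_derivative d) (at x) \<and> 0 \<le> d"
      by auto
  qed
  then show ?thesis
    by (simp add: Q_def)
qed

lemma one_plus_inverse_powr_eq:
  fixes s :: real
  assumes "1 < s"
  shows "(1 + 1 / (s - 1)) powr (s - 1) = exp ((s - 1) * (ln s - ln (s - 1)))"
proof -
  have "1 + 1 / (s - 1) = s / (s - 1)"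
    using assms by (simp add: field_simps)
  then show ?thesis
    using assms by (simp add: powr_def ln_div mult.commute)
qed

lemma one_plus_inverse_powr_less_exp_1:
  fixes s :: real
  assumes "1 < s"
  shows "(1 + 1 / (s - 1)) powr (s - 1) < exp 1"
proof -
  have "(s - 1) * ln (1 + 1 / (s - 1)) < (s - 1) * (1 / (s - 1))"
    using assms by (intro mult_strict_left_mono ln_add_one_self_less_self) auto
  then show ?thesis
    using assms by (simp add: powr_def mult.commute)
qed

lemma exp_le_one_plus_inverse_powr:
  fixes s :: real
  assumes "1 < s"
  shows "exp (1 - 1 / (2 * (s - 1))) \<le> (1 + 1 / (s - 1)) powr (s - 1)"
proof -
  define y where "y = 1 / (s - 1)"
  have "1 - 1 / (2 * (s - 1)) = (s - 1) * y * (1 - y / 2)"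
    using assms by (simp add: y_def)
  also have "\<dots> = (s - 1) * (y - y\<^sup>2 / 2)"
    by (simp add: algebra_simps power2_eq_square)
  also have "\<dots> \<le> (s - 1) * ln (1 + y)"
    using assms by (intro mult_left_mono ln_one_plus_ge_quadratic) (auto simp: y_def)
  finally have "1 - 1 / (2 * (s - 1)) \<le> (s - 1) * ln (1 + y)" .
  moreover have "0 < 1 + y"
    using assms by (simp add: y_def add_pos_pos)
  ultimately show ?thesis
    by (simp add: powr_def y_def mult.commute)
qed

lemma mult_exp_le_one_plus_inverse_powr:
  fixes s :: real
  assumes "2 \<le> s"
  shows "s * exp ((s - 2) * (ln 2 - 1)) \<le> (1 + 1 / (s - 1)) powr (s - 1)"
proof -
  have "s * exp ((s - 2) * (ln 2 - 1)) = exp (ln s + (s - 2) * (ln 2 - 1))"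
    using assms by (simp add: exp_add)
  also have "\<dots> \<le> exp ((s - 1) * (ln s - ln (s - 1)))"
    using mult_ln_div_pred_ge[OF assms] by simp
  also have "\<dots> = (1 + 1 / (s - 1)) powr (s - 1)"
    using assms by (simp add: one_plus_inverse_powr_eq)
  finally show ?thesis .
qed

section \<open>Pointwise bounds for the normalized sinc function\<close>

lemma nsinc_eq_sinc: "nsinc x = sinc (pi * x)"
  by (simp add: nsinc_def)

lemma nsinc_minus [simp]: "nsinc (- x) = nsinc x"
  by (simp add: nsinc_eq_sinc)

lemma isCont_nsinc: "isCont nsinc x"
  unfolding nsinc_eq_sinc[abs_def] by (intro continuous_intros isCont_o2[OF _ isCont_sinc])

lemma borel_measurable_nsinc [measurable]: "nsinc \<in> borel_measurable borel"
  unfolding nsinc_eq_sinc[abs_def] by measurable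

lemma abs_nsinc_le_exp_neg_square:
  assumes "\<bar>x\<bar> \<le> 1"
  shows "\<bar>nsinc x\<bar> \<le> exp (- (pi\<^sup>2 * x\<^sup>2) / 6)"
proof -
  define t where "t = pi * \<bar>x\<bar>"
  have t: "0 \<le> t" "t \<le> pi"
    using assms by (auto simp: t_def)
  have "nsinc x = sinc t"
    by (cases "x \<ge> 0") (auto simp: nsinc_eq_sinc t_def)
  moreover have "0 \<le> sinc t"
    using t by (cases "t = 0") (auto simp: sin_ge_zero)
  moreover have "sinc t \<le> exp (- (t\<^sup>2) / 6)"
    using sin_le_mult_exp_neg_square[OF t] t by (cases "t = 0") (auto simp: field_simps mult.commute)
  ultimately show ?thesis
    by (simp add: t_def power_mult_distrib)
qed

lemma abs_nsinc_le_inverse: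
  assumes "x \<noteq> 0"
  shows "\<bar>nsinc x\<bar> \<le> 1 / (pi * \<bar>x\<bar>)"
  using assms by (simp add: nsinc_def abs_divide abs_mult divide_right_mono)

lemma abs_nsinc_powr_le_majorant:
  assumes "0 < s"
  shows "\<bar>nsinc x\<bar> powr s \<le> exp (- (s * pi\<^sup>2 / 6 * x\<^sup>2)) + pi powr - s * (indicator {1..} \<bar>x\<bar> * \<bar>x\<bar> powr - s)"
proof (cases "\<bar>x\<bar> \<le> 1")
  case True
  have "\<bar>nsinc x\<bar> powr s \<le> exp (- (pi\<^sup>2 * x\<^sup>2) / 6) powr s"
    using assms abs_nsinc_le_exp_neg_square[OF True] by (intro powr_mono2) auto
  also have "\<dots> = exp (- (s * pi\<^sup>2 / 6 * x\<^sup>2))"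
    by (simp add: powr_def)
  finally show ?thesis
    by (simp add: add_increasing2)
next
  case False
  have "\<bar>nsinc x\<bar> powr s \<le> (1 / (pi * \<bar>x\<bar>)) powr s"
    using assms False abs_nsinc_le_inverse[of x] by (intro powr_mono2) auto
  also have "\<dots> = pi powr - s * \<bar>x\<bar> powr - s"
    using False by (simp add: powr_minus_divide powr_divide powr_mult)
  finally show ?thesis
    using False by (simp add: add_increasing)
qed

section \<open>Integrals of powers of the sinc function\<close>

lemma integral_abs_nsinc_powr_le:
  assumes "1 < s"
  shows "integrable lborel (\<lambda>x. \<bar>nsinc x\<bar> powr s)"
    "(\<integral>x. \<bar>nsinc x\<bar> powr s \<partial>lborel) \<le> sqrt (6 / (pi * s)) + 2 / (pi powr s * (s - 1))"
proof -
  define M where "M x = exp (- (s * pi\<^sup>2 / 6 * x\<^sup>2)) + pi powr - s * (indicator {1..} \<bar>x\<bar> * \<bar>x\<bar> powr - s)"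
    for x
  have a: "0 < s * pi\<^sup>2 / 6" and sqrt_eq: "pi / (s * pi\<^sup>2 / 6) = 6 / (pi * s)"
    using assms by (auto simp: power2_eq_square)
  note gauss = integral_exp_neg_mult_square[OF a, unfolded sqrt_eq]
  note tail = integral_abs_powr_tail[OF assms]
  have M: "integrable lborel M"
    unfolding M_def[abs_def]
    by (intro Bochner_Integration.integrable_add integrable_mult_right gauss(1) tail(1))
  have "(\<integral>x. M x \<partial>lborel) = sqrt (6 / (pi * s)) + pi powr - s * (2 / (s - 1))"
    unfolding M_def[abs_def]
    by (subst Bochner_Integration.integral_add)
      (use gauss tail(1) in \<open>auto intro: integrable_mult_right simp: tail(2)\<close>)
  also have "pi powr - s * (2 / (s - 1)) = 2 / (pi powr s * (s - 1))"
    by (simp add: powr_minus divide_inverse mult.commute)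
  finally have "(\<integral>x. M x \<partial>lborel) = sqrt (6 / (pi * s)) + 2 / (pi powr s * (s - 1))" .
  moreover have bound: "\<bar>nsinc x\<bar> powr s \<le> M x" for x
    using abs_nsinc_powr_le_majorant[of s x] assms by (simp add: M_def)
  moreover have "norm (\<bar>nsinc x\<bar> powr s) \<le> norm (M x)" for x
    using bound[of x] by simp
  then show int: "integrable lborel (\<lambda>x. \<bar>nsinc x\<bar> powr s)"
    by (intro Bochner_Integration.integrable_bound[OF M]) auto
  ultimately show "(\<integral>x. \<bar>nsinc x\<bar> powr s \<partial>lborel) \<le> sqrt (6 / (pi * s)) + 2 / (pi powr s * (s - 1))"
    using integral_mono[OF int M bound] by simp
qed

text \<open>Integrating \<open>sin\<^sup>2(\<pi>x)/(\<pi>x)\<^sup>2\<close> by parts gives \<open>(Si (2\<pi>x) - sin\<^sup>2(\<pi>x)/(\<pi>x))/\<pi>\<close>; writing the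
  boundary term with \<open>sinc\<close> makes it continuous at 0.\<close>
definition nsinc_sq_antideriv :: "real \<Rightarrow> real" where
  "nsinc_sq_antideriv x = Si (2 * pi * x) / pi - sin (pi * x) * sinc (pi * x) / pi"

lemma nsinc_sq_antideriv_has_derivative:
  assumes "x \<noteq> 0"
  shows "(nsinc_sq_antideriv has_real_derivative nsinc x ^ 2) (at x)"
proof -
  have Si: "((\<lambda>x. Si (2 * pi * x)) has_real_derivative sinc (2 * pi * x) * (2 * pi)) (at x)"
    by (rule DERIV_chain2[OF DERIV_Si]) (auto intro!: derivative_eq_intros)
  have "((\<lambda>x. Si (2 * pi * x) / pi - (sin (pi * x))\<^sup>2 / (pi\<^sup>2 * x)) has_real_derivative
      sinc (2 * pi * x) * (2 * pi) / pi
        - (2 * sin (pi * x) * cos (pi * x) * pi * (pi\<^sup>2 * x) - (sin (pi * x))\<^sup>2 * pi\<^sup>2) / (pi\<^sup>2 * x)\<^sup>2) (at x)"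
    using assms by (auto intro!: derivative_eq_intros Si simp: power2_eq_square)
  also have "sinc (2 * pi * x) * (2 * pi) / pi
        - (2 * sin (pi * x) * cos (pi * x) * pi * (pi\<^sup>2 * x) - (sin (pi * x))\<^sup>2 * pi\<^sup>2) / (pi\<^sup>2 * x)\<^sup>2
      = nsinc x ^ 2"
    using assms sin_double[of "pi * x"] by (simp add: nsinc_def field_simps power2_eq_square)
  finally show ?thesis
    by (rule has_field_derivative_transform_within_open[where S = "- {0}"])
      (use assms in \<open>auto simp: nsinc_sq_antideriv_def power2_eq_square field_simps\<close>)
qed

lemma isCont_nsinc_sq_antideriv: "isCont nsinc_sq_antideriv x"
  unfolding nsinc_sq_antideriv_def[abs_def]
  by (intro continuous_intros isCont_o2[OF _ isCont_sinc] isCont_o2[OF _ isCont_Si]) auto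

lemma nsinc_sq_antideriv_0: "nsinc_sq_antideriv 0 = 0"
  by (simp add: nsinc_sq_antideriv_def Si_def zero_ereal_def)

lemma nsinc_sq_antideriv_at_top: "(nsinc_sq_antideriv \<longlongrightarrow> 1 / 2) at_top"
proof -
  have lin: "filterlim (\<lambda>x. c * x) at_top at_top" if "0 < c" for c :: real
    using that by (intro filterlim_tendsto_pos_mult_at_top[OF tendsto_const]) (auto simp: filterlim_ident)
  have Si: "((\<lambda>x. Si (2 * pi * x)) \<longlongrightarrow> pi / 2) at_top"
    using filterlim_compose[OF Si_at_top lin[of "2 * pi"]] by simp
  have rest: "((\<lambda>x. sin (pi * x) * sinc (pi * x) / pi) \<longlongrightarrow> 0) at_top"
  proof (rule Lim_null_comparison)
    show "\<forall>\<^sub>F x in at_top. norm (sin (pi * x) * sinc (pi * x) / pi) \<le> 1 / (pi\<^sup>2 * x)"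
      using eventually_gt_at_top[of 0]
    proof eventually_elim
      case (elim x)
      have "\<bar>sin (pi * x)\<bar> * \<bar>sin (pi * x)\<bar> \<le> 1"
        by (intro mult_le_one) auto
      then show ?case
        using elim by (simp add: abs_mult power2_eq_square field_simps)
    qed
    show "((\<lambda>x. 1 / (pi\<^sup>2 * x)) \<longlongrightarrow> 0) at_top"
      by (intro tendsto_divide_0[OF tendsto_const] filterlim_at_top_imp_at_infinity lin) simp
  qed
  from tendsto_diff[OF tendsto_divide[OF Si tendsto_const[of pi]] rest] show ?thesis
    unfolding nsinc_sq_antideriv_def[abs_def] by simp
qed

lemma integral_nsinc_square:
  shows "integrable lborel (\<lambda>x. nsinc x ^ 2)" "(\<integral>x. nsinc x ^ 2 \<partial>lborel) = 1"
proof -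
  have at_0: "(nsinc_sq_antideriv \<longlongrightarrow> 0) (at_right 0)"
    using isCont_nsinc_sq_antideriv[of 0] nsinc_sq_antideriv_0
    by (simp add: isCont_def filterlim_at_split)
  have cont: "isCont (\<lambda>x. nsinc x ^ 2) x" for x
    by (intro continuous_intros isCont_nsinc)
  note FTC = interval_integral_FTC_nonneg[where a = 0 and b = \<infinity> and F = nsinc_sq_antideriv
      and f = "\<lambda>x. nsinc x ^ 2" and A = 0 and B = "1 / 2",
      OF _ nsinc_sq_antideriv_has_derivative cont]
  have "set_integrable lborel (einterval 0 \<infinity>) (\<lambda>x. nsinc x ^ 2)"
    and "(LBINT x=0..\<infinity>. nsinc x ^ 2) = 1 / 2 - 0"
    by (rule FTC; simp add: zero_ereal_def ereal_tendsto_simps at_0 nsinc_sq_antideriv_at_top)+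
  then have "set_integrable lborel {0<..} (\<lambda>x. nsinc x ^ 2)"
    and "(LINT x:{0<..}|lborel. nsinc x ^ 2) = 1 / 2"
    by (simp_all add: interval_lebesgue_integral_def zero_ereal_def)
  then show "integrable lborel (\<lambda>x. nsinc x ^ 2)" "(\<integral>x. nsinc x ^ 2 \<partial>lborel) = 1"
    using lborel_integral_even[of "\<lambda>x. nsinc x ^ 2"] by auto
qed

lemma integral_abs_nsinc_cube_le: "(\<integral>x. \<bar>nsinc x\<bar> powr 3 \<partial>lborel) \<le> 5 / 6"
proof -
  have "(\<integral>x. \<bar>nsinc x\<bar> powr 3 \<partial>lborel) \<le> sqrt (6 / (pi * 3)) + 2 / (pi powr 3 * (3 - 1))"
    by (rule integral_abs_nsinc_powr_le(2)) simp
  moreover have "sqrt (6 / (pi * 3)) \<le> 7979 / 10000"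
    by (rule real_le_lsqrt) (use pi_approx in \<open>simp_all add: field_simps\<close>)
  moreover have "2 / (pi powr 3 * (3 - 1)) \<le> 1 / 31"
    using pi_cube_ge by (simp add: divide_left_mono)
  ultimately show ?thesis
    by linarith
qed

lemma integral_abs_nsinc_powr_le_small:
  assumes "2 \<le> s" "s \<le> 3"
  shows "(\<integral>x. \<bar>nsinc x\<bar> powr s \<partial>lborel) \<le> exp ((s - 2) * (ln 2 - 1) / 2)"
proof -
  have cube: "integrable lborel (\<lambda>x. \<bar>nsinc x\<bar> powr 3)"
    using integral_abs_nsinc_powr_le(1)[of 3] by simp
  have "\<bar>nsinc x\<bar> powr s \<le> (3 - s) * nsinc x ^ 2 + (s - 2) * \<bar>nsinc x\<bar> powr 3" for x
    using powr_le_convex_combination[of "\<bar>nsinc x\<bar>" "s - 2" 2 3] assms by simp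
  then have "(\<integral>x. \<bar>nsinc x\<bar> powr s \<partial>lborel)
      \<le> (\<integral>x. (3 - s) * nsinc x ^ 2 + (s - 2) * \<bar>nsinc x\<bar> powr 3 \<partial>lborel)"
    using assms integral_abs_nsinc_powr_le(1)[of s] integral_nsinc_square(1) cube
    by (intro integral_mono) auto
  also have "\<dots> = (3 - s) + (s - 2) * (\<integral>x. \<bar>nsinc x\<bar> powr 3 \<partial>lborel)"
    using integral_nsinc_square cube by simp
  also have "\<dots> \<le> (3 - s) + (s - 2) * (5 / 6)"
    using assms integral_abs_nsinc_cube_le by (intro add_left_mono mult_left_mono) auto
  also have "\<dots> = 1 + (s - 2) * (- 1 / 3) / 2"
    by (simp add: field_simps)
  also have "\<dots> \<le> 1 + (s - 2) * (ln 2 - 1) / 2"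
    using assms ln2_ge_two_thirds by (intro add_left_mono divide_right_mono mult_left_mono) auto
  also have "\<dots> \<le> exp ((s - 2) * (ln 2 - 1) / 2)"
    by (rule exp_ge_add_one_self)
  finally show ?thesis .
qed

lemma integral_abs_nsinc_powr_le_large:
  assumes "3 \<le> s"
  shows "(\<integral>x. \<bar>nsinc x\<bar> powr s \<partial>lborel) \<le> exp (3 / 8) / sqrt s"
proof -
  have pos: "0 < sqrt s" "0 < pi powr s" "0 < s - 1"
    using assms by auto
  have "sqrt (6 / (pi * s)) = sqrt (6 / pi) / sqrt s"
    by (simp add: real_sqrt_divide real_sqrt_mult)
  moreover have "sqrt (6 / pi) \<le> 13821 / 10000"
    by (rule real_le_lsqrt) (use pi_approx in \<open>simp_all add: field_simps\<close>)
  ultimately have gauss: "sqrt (6 / (pi * s)) \<le> (13821 / 10000) / sqrt s"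
    by (metis divide_right_mono less_imp_le pos(1))
  have sqrt_s: "sqrt s \<le> 17321 / 20000 * (s - 1)"
  proof (rule real_le_lsqrt)
    have "0 \<le> (3 * s - 1) * (s - 3)"
      using assms by simp
    then have "s \<le> 3 / 4 * (s - 1)\<^sup>2"
      by (simp add: power2_eq_square algebra_simps)
    also have "\<dots> \<le> (17321 / 20000)\<^sup>2 * (s - 1)\<^sup>2"
      by (intro mult_right_mono) (auto simp: power2_eq_square)
    finally show "s \<le> (17321 / 20000 * (s - 1))\<^sup>2"
      by (simp only: power_mult_distrib)
  qed (use assms in simp)
  have pi_s: "31 \<le> pi powr s"
    using pi_cube_ge powr_mono[of 3 s pi] assms pi_gt3 by simp
  have "2 * sqrt s \<le> 559 / 10000 * (31 * (s - 1))"
    using sqrt_s pos by simp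
  also have "\<dots> \<le> 559 / 10000 * (pi powr s * (s - 1))"
    using pi_s pos by (intro mult_left_mono mult_right_mono) auto
  finally have "2 * sqrt s \<le> 559 / 10000 * (pi powr s * (s - 1))" .
  then have tail: "2 / (pi powr s * (s - 1)) \<le> (559 / 10000) / sqrt s"
    using pos by (simp add: field_simps)
  have "(\<integral>x. \<bar>nsinc x\<bar> powr s \<partial>lborel) \<le> (13821 / 10000 + 559 / 10000) / sqrt s"
    using integral_abs_nsinc_powr_le(2)[of s] assms gauss tail by (simp add: add_divide_distrib)
  also have "\<dots> \<le> exp (3 / 8) / sqrt s"
  proof (rule divide_right_mono)
    show "13821 / 10000 + 559 / 10000 \<le> exp (3 / 8 :: real)"
      using exp_lower_Taylor_quadratic[of "3 / 8"] by (simp add: power2_eq_square)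
  qed (use pos in simp)
  finally show ?thesis .
qed

theorem mainTheorem1:
  fixes s :: real
  assumes "s \<ge> 2"
  shows "integrable lborel (\<lambda>x. \<bar>nsinc x\<bar> powr s)
    \<and> (\<integral>x. \<bar>nsinc x\<bar> powr s \<partial>lborel)
        \<le> (1 / sqrt s) * sqrt ((1 + 1 / (s - 1)) powr (s - 1))
    \<and> (1 / sqrt s) * sqrt ((1 + 1 / (s - 1)) powr (s - 1)) < sqrt (exp 1 / s)"
proof -
  define R where "R = (1 + 1 / (s - 1)) powr (s - 1)"
  have "(\<integral>x. \<bar>nsinc x\<bar> powr s \<partial>lborel) \<le> sqrt (R / s)"
  proof (cases "s \<le> 3")
    case True
    have "(\<integral>x. \<bar>nsinc x\<bar> powr s \<partial>lborel) \<le> exp ((s - 2) * (ln 2 - 1) / 2)"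
      using integral_abs_nsinc_powr_le_small[OF assms True] .
    also have "\<dots> = sqrt (exp ((s - 2) * (ln 2 - 1)))"
      by (simp add: sqrt_exp)
    also have "\<dots> \<le> sqrt (R / s)"
      using mult_exp_le_one_plus_inverse_powr[OF assms] assms
      by (simp add: R_def pos_le_divide_eq mult.commute)
    finally show ?thesis .
  next
    case False
    have "(\<integral>x. \<bar>nsinc x\<bar> powr s \<partial>lborel) \<le> sqrt (exp (3 / 4)) / sqrt s"
      using integral_abs_nsinc_powr_le_large[of s] False by (simp add: sqrt_exp)
    also have "\<dots> \<le> sqrt R / sqrt s"
    proof (intro divide_right_mono real_sqrt_le_mono)
      have "exp (3 / 4) \<le> exp (1 - 1 / (2 * (s - 1)))"
        using False by (simp add: field_simps)
      also have "\<dots> \<le> R"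
        using exp_le_one_plus_inverse_powr[of s] assms by (simp add: R_def)
      finally show "exp (3 / 4) \<le> R" .
    qed (use assms in simp)
    finally show ?thesis
      by (simp add: real_sqrt_divide)
  qed
  moreover have "sqrt (R / s) < sqrt (exp 1 / s)"
    using one_plus_inverse_powr_less_exp_1[of s] assms by (simp add: R_def divide_strict_right_mono)
  ultimately show ?thesis
    using integral_abs_nsinc_powr_le(1)[of s] assms by (simp add: R_def real_sqrt_divide)
qed

end
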